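(* Let $k\ge 3$, let $n_1,\dots,n_k$ be positive integers, and let $X=\nu(\mathbb{P}^{n_1}\times\cdots\times\mathbb{P}^{n_k})\subset\mathbb{P}^M$ be the Segre variety of $k$ factors. Then for each integer $x\in\{3,\dots,k-1\}$ there exists $p\in\sigma_3(X)\setminus\sigma_2(X)$ with $r_X(p)=x$.
   Context: Work over an algebraically closed field $K$. $\nu:\mathbb{P}^{n_1}\times\cdots\times\mathbb{P}^{n_k}\to\mathbb{P}^M$, $M=\prod_{i=1}^k(n_i+1)-1$, is the Segre embedding (given by $|\mathcal{O}(1,\dots,1)|$), and $X$ is its image. The $s$-th secant variety $\sigma_s(X)$ is the Zariski closure of the union of all linear spaces $\mathbb{P}^{s-1}$ spanned by $s$ points of $X$. The $X$-rank $r_X(p)$ of $p\in\mathbb{P}^M$ is the minimal $s$ such that $p$ lies in the linear span of $s$ points of $X$. *)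

theory Defs
  imports "HOL-Computational_Algebra.Polynomial"
begin

definition alg_closed :: "'a::field itself \<Rightarrow> bool" where
  "alg_closed _ \<longleftrightarrow> (\<forall>p :: 'a poly. degree p > 0 \<longrightarrow> (\<exists>z. poly p z = 0))"

text \<open>Multi-indices of the tensor space K^(n_0+1) x ... x K^(n_(k-1)+1):
  functions f with f i \<le> n i for i < k and f i = 0 for i \<ge> k.\<close>
definition idx :: "nat \<Rightarrow> (nat \<Rightarrow> nat) \<Rightarrow> (nat \<Rightarrow> nat) set" where
  "idx k n = {f. (\<forall>i<k. f i \<le> n i) \<and> (\<forall>i\<ge>k. f i = 0)}"

text \<open>The ambient affine space K^(M+1) (affine cone over P^M): tensors supported on idx.\<close>
definition tensors :: "nat \<Rightarrow> (nat \<Rightarrow> nat) \<Rightarrow> ((nat \<Rightarrow> nat) \<Rightarrow> 'a::field) set" where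
  "tensors k n = {T. \<forall>f. f \<notin> idx k n \<longrightarrow> T f = 0}"

text \<open>Nonzero decomposable tensors v_0 (x) ... (x) v_(k-1): the affine cone over the Segre variety X.\<close>
definition segre_cone :: "nat \<Rightarrow> (nat \<Rightarrow> nat) \<Rightarrow> ((nat \<Rightarrow> nat) \<Rightarrow> 'a::field) set" where
  "segre_cone k n = {T. \<exists>v :: nat \<Rightarrow> nat \<Rightarrow> 'a.
      (\<forall>i<k. \<exists>j\<le>n i. v i j \<noteq> 0) \<and>
      T = (\<lambda>f. if f \<in> idx k n then (\<Prod>i<k. v i (f i)) else 0)}"

inductive_set poly_fun :: "nat \<Rightarrow> (nat \<Rightarrow> nat) \<Rightarrow> (((nat \<Rightarrow> nat) \<Rightarrow> 'a::field) \<Rightarrow> 'a) set"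
  for k n where
  const: "(\<lambda>T. c) \<in> poly_fun k n"
| coord: "f \<in> idx k n \<Longrightarrow> (\<lambda>T. T f) \<in> poly_fun k n"
| add: "P \<in> poly_fun k n \<Longrightarrow> Q \<in> poly_fun k n \<Longrightarrow> (\<lambda>T. P T + Q T) \<in> poly_fun k n"
| mult: "P \<in> poly_fun k n \<Longrightarrow> Q \<in> poly_fun k n \<Longrightarrow> (\<lambda>T. P T * Q T) \<in> poly_fun k n"

definition zariski_closed :: "nat \<Rightarrow> (nat \<Rightarrow> nat) \<Rightarrow> ((nat \<Rightarrow> nat) \<Rightarrow> 'a::field) set \<Rightarrow> bool" where
  "zariski_closed k n C \<longleftrightarrow>
     (\<exists>S \<subseteq> poly_fun k n. C = {T \<in> tensors k n. \<forall>P\<in>S. P T = 0})"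

definition zariski_closure :: "nat \<Rightarrow> (nat \<Rightarrow> nat) \<Rightarrow> ((nat \<Rightarrow> nat) \<Rightarrow> 'a::field) set
    \<Rightarrow> ((nat \<Rightarrow> nat) \<Rightarrow> 'a) set" where
  "zariski_closure k n A = \<Inter>{C. zariski_closed k n C \<and> A \<subseteq> C}"

text \<open>Sums of s points of the Segre cone (= union of spans of s points of X, on the cone).\<close>
definition sums_of :: "nat \<Rightarrow> (nat \<Rightarrow> nat) \<Rightarrow> nat \<Rightarrow> ((nat \<Rightarrow> nat) \<Rightarrow> 'a::field) set" where
  "sums_of k n s = {T. \<exists>Ts :: nat \<Rightarrow> (nat \<Rightarrow> nat) \<Rightarrow> 'a.
      (\<forall>j<s. Ts j \<in> segre_cone k n) \<and> T = (\<lambda>f. \<Sum>j<s. Ts j f)}"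

text \<open>Affine cone over the s-th secant variety sigma_s(X).\<close>
definition secant_cone :: "nat \<Rightarrow> (nat \<Rightarrow> nat) \<Rightarrow> nat \<Rightarrow> ((nat \<Rightarrow> nat) \<Rightarrow> 'a::field) set" where
  "secant_cone k n s = zariski_closure k n (sums_of k n s)"

definition X_rank :: "nat \<Rightarrow> (nat \<Rightarrow> nat) \<Rightarrow> ((nat \<Rightarrow> nat) \<Rightarrow> 'a::field) \<Rightarrow> nat" where
  "X_rank k n T = (LEAST s. T \<in> sums_of k n s)"

end

theory Submission
  imports Defs "HOL-Library.Indicator_Function"
begin

text \<open>
  Write x_0, x_1 for the first two basis vectors of each factor and e_S for the basis tensor
  whose l-th factor is x_1 if l \<in> S and x_0 otherwise. The witness is
  T = e_{0} + ... + e_{x-2} + e_{0,...,k-1}. It is a limit of the rank 3 tensors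
  (1/t) (v_t - e_{}) + e_{0,...,k-1}, where v_t is decomposable with factor x_0 + t x_1 in the
  first x - 1 positions and x_0 elsewhere, so T lies in \<sigma>_3. A 3 \<times> 3 minor of the flattening
  that groups the factors 0 and k - 1 against the others is nonzero at T, so T is not in \<sigma>_2.
  The rank of T is at most x by construction. It is at least x by the substitution method:
  applying in one factor a rank one map that kills a summand of a decomposition shortens the
  decomposition and turns T into a tensor of the same shape with one term e_{i} fewer.
\<close>

definition tensor_prod :: "nat \<Rightarrow> (nat \<Rightarrow> nat) \<Rightarrow> (nat \<Rightarrow> nat \<Rightarrow> 'a::field) \<Rightarrow> (nat \<Rightarrow> nat) \<Rightarrow> 'a" where
  "tensor_prod k n v = (\<lambda>f. if f \<in> idx k n then \<Prod>i<k. v i (f i) else 0)"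

lemma segre_cone_iff:
  "T \<in> segre_cone k n \<longleftrightarrow> (\<exists>v. (\<forall>i<k. \<exists>j\<le>n i. v i j \<noteq> 0) \<and> T = tensor_prod k n v)"
  unfolding segre_cone_def tensor_prod_def by auto

lemma tensor_prod_in_tensors: "tensor_prod k n v \<in> tensors k n"
  unfolding tensor_prod_def tensors_def by auto

lemma idx_update:
  assumes "i < k"
  shows "f(i := j) \<in> idx k n \<longleftrightarrow> j \<le> n i \<and> (\<forall>l<k. l \<noteq> i \<longrightarrow> f l \<le> n l) \<and> (\<forall>l\<ge>k. f l = 0)"
  using assms unfolding idx_def by auto

lemma idx_nonzero:
  assumes "f \<in> idx k n" "f i \<noteq> 0"
  shows "i < k" "f i \<le> n i"
proof -
  show "i < k"
  proof (rule ccontr)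
    assume "\<not> i < k"
    then show False
      using assms unfolding idx_def by simp
  qed
  then show "f i \<le> n i"
    using assms(1) unfolding idx_def by simp
qed

lemma tensor_prod_update_factor:
  assumes "i < k"
  shows "tensor_prod k n (v(i := w)) (f(i := j)) =
    (if f(i := j) \<in> idx k n then w j * (\<Prod>l\<in>{..<k} - {i}. v l (f l)) else 0)"
proof -
  have "(\<Prod>l\<in>{..<k} - {i}. (v(i := w)) l ((f(i := j)) l)) = (\<Prod>l\<in>{..<k} - {i}. v l (f l))"
    by (rule prod.cong) auto
  then have "(\<Prod>l<k. (v(i := w)) l ((f(i := j)) l)) = w j * (\<Prod>l\<in>{..<k} - {i}. v l (f l))"
    using assms by (simp add: prod.remove[of "{..<k}" i])
  then show ?thesis
    unfolding tensor_prod_def by simp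
qed

lemma tensor_prod_split_factor:
  assumes "i < k" "f \<in> idx k n"
  shows "tensor_prod k n v f = v i (f i) * (\<Prod>l\<in>{..<k} - {i}. v l (f l))"
  using tensor_prod_update_factor[OF assms(1), of n v "v i" f "f i"] assms(2) by simp

lemma tensor_prod_scale_factor:
  assumes "i < k"
  shows "tensor_prod k n (v(i := (\<lambda>j. d * v i j))) f = d * tensor_prod k n v f"
  using tensor_prod_update_factor[OF assms, of n v _ f "f i"]
    tensor_prod_split_factor[OF assms, of f n v]
  by (auto simp: tensor_prod_def)

lemma segre_cone_scale:
  assumes "T \<in> segre_cone k n" "d \<noteq> 0" "0 < k"
  shows "(\<lambda>f. d * T f) \<in> segre_cone k n"
proof -
  obtain v where v: "\<forall>i<k. \<exists>j\<le>n i. v i j \<noteq> 0" "T = tensor_prod k n v"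
    using assms(1) unfolding segre_cone_iff by blast
  have "(\<lambda>f. d * T f) = tensor_prod k n (v(0 := (\<lambda>j. d * v 0 j)))"
    unfolding v(2) by (rule ext) (rule tensor_prod_scale_factor[OF assms(3), symmetric])
  moreover have "\<forall>i<k. \<exists>j\<le>n i. (v(0 := (\<lambda>j. d * v 0 j))) i j \<noteq> 0"
    using v(1) assms(2) by auto
  ultimately show ?thesis
    unfolding segre_cone_iff by blast
qed

lemma tensor_prod_zero_factor:
  assumes "i < k" "\<forall>j. v i j = 0"
  shows "tensor_prod k n v = (\<lambda>f. 0)"
  using assms unfolding tensor_prod_def
  by (auto simp: fun_eq_iff prod_zero_iff intro!: bexI[of _ i])

lemma indicator_in_idx:
  assumes "\<forall>l<k. 1 \<le> n l" "S \<subseteq> {..<k}"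
  shows "indicator S \<in> idx k n"
  using assms unfolding idx_def by (auto simp: indicator_def)

lemma indicator_eq_indicator_iff: "(indicator S :: nat \<Rightarrow> nat) = indicator S' \<longleftrightarrow> S = S'"
  by (auto simp: fun_eq_iff indicator_def)

lemma indicator_update:
  "(indicator S :: nat \<Rightarrow> nat)(i := 1) = indicator (insert i S)"
  "(indicator S :: nat \<Rightarrow> nat)(i := 0) = indicator (S - {i})"
  by (auto simp: fun_eq_iff indicator_def)

definition basis_tensor :: "nat set \<Rightarrow> (nat \<Rightarrow> nat) \<Rightarrow> 'a::field" where
  "basis_tensor S f = (if f = indicator S then 1 else 0)"

lemma basis_tensor_eq_tensor_prod:
  assumes "\<forall>l<k. 1 \<le> n l" "S \<subseteq> {..<k}"
  shows "basis_tensor S = tensor_prod k n (\<lambda>l j. if j = indicator S l then 1 else 0)"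
proof
  fix f
  have "f = indicator S \<longleftrightarrow> (\<forall>l<k. f l = indicator S l)" if "f \<in> idx k n"
  proof
    assume "\<forall>l<k. f l = indicator S l"
    moreover have "f l = 0" "indicator S l = (0::nat)" if "\<not> l < k" for l
      using \<open>f \<in> idx k n\<close> assms(2) that unfolding idx_def by (auto simp: indicator_def)
    ultimately show "f = indicator S"
      by (metis ext)
  qed simp
  moreover have "(\<Prod>l<k. if f l = indicator S l then 1 else (0::'a)) =
      (if \<forall>l<k. f l = indicator S l then 1 else 0)"
    by (auto simp: prod_zero_iff)
  ultimately show "basis_tensor S f = tensor_prod k n (\<lambda>l j. if j = indicator S l then 1 else 0) f"
    using indicator_in_idx[OF assms] unfolding basis_tensor_def tensor_prod_def by auto
qed

lemma basis_tensor_in_segre_cone: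
  assumes "\<forall>l<k. 1 \<le> n l" "S \<subseteq> {..<k}"
  shows "basis_tensor S \<in> segre_cone k n"
proof -
  have "indicator S l \<le> n l" if "l < k" for l
    using assms(1) that by (simp add: indicator_def)
  then have "\<forall>l<k. \<exists>j\<le>n l. (if j = indicator S l then 1 else (0::'a)) \<noteq> 0"
    by auto
  then show ?thesis
    unfolding segre_cone_iff basis_tensor_eq_tensor_prod[OF assms]
    by (intro exI conjI) (assumption, rule refl)
qed

text \<open>set_tensor \<kappa> is the sum of \<kappa> S \<cdot> basis_tensor S over all sets S.\<close>

definition set_tensor :: "(nat set \<Rightarrow> 'a::field) \<Rightarrow> (nat \<Rightarrow> nat) \<Rightarrow> 'a" where
  "set_tensor \<kappa> f = (if f = indicator {l. f l \<noteq> 0} then \<kappa> {l. f l \<noteq> 0} else 0)"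

lemma set_tensor_indicator [simp]: "set_tensor \<kappa> (indicator S) = \<kappa> S"
  unfolding set_tensor_def by (simp add: indicator_def)

lemma set_tensor_not_indicator: "(\<And>S. f \<noteq> indicator S) \<Longrightarrow> set_tensor \<kappa> f = 0"
  unfolding set_tensor_def by auto

lemma basis_tensor_eq_set_tensor: "basis_tensor S = set_tensor (\<lambda>S'. if S' = S then 1 else 0)"
proof
  fix f :: "nat \<Rightarrow> nat"
  show "basis_tensor S f = set_tensor (\<lambda>S'. if S' = S then 1 else 0) f"
  proof (cases "f = indicator S")
    case False
    then show ?thesis
      unfolding basis_tensor_def set_tensor_def by auto
  qed (simp add: basis_tensor_def)
qed

lemma set_tensor_in_tensors:
  assumes "\<forall>l<k. 1 \<le> n l" "\<And>S. \<not> S \<subseteq> {..<k} \<Longrightarrow> \<kappa> S = 0"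
  shows "set_tensor \<kappa> \<in> tensors k n"
  unfolding tensors_def
proof (intro CollectI allI impI)
  fix f :: "nat \<Rightarrow> nat"
  assume f: "f \<notin> idx k n"
  show "set_tensor \<kappa> f = 0"
  proof (cases "f = indicator {l. f l \<noteq> 0}")
    case True
    then have "\<not> {l. f l \<noteq> 0} \<subseteq> {..<k}"
      using f indicator_in_idx[OF assms(1)] by metis
    then show ?thesis
      unfolding set_tensor_def using assms(2) by simp
  qed (simp add: set_tensor_def)
qed

text \<open>collapse i c applies, in the i-th factor, the rank one linear map
  (y_0, y_1, y_2, ...) \<mapsto> (y_0 + c y_1, 0, 0, ...).\<close>

definition collapse :: "nat \<Rightarrow> 'a::field \<Rightarrow> ((nat \<Rightarrow> nat) \<Rightarrow> 'a) \<Rightarrow> (nat \<Rightarrow> nat) \<Rightarrow> 'a" where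
  "collapse i c T = (\<lambda>f. if f i = 0 then T (f(i := 0)) + c * T (f(i := 1)) else 0)"

lemma collapse_tensor_prod:
  assumes "i < k" "1 \<le> n i"
  shows "collapse i c (tensor_prod k n v) =
    tensor_prod k n (v(i := (\<lambda>j. if j = 0 then v i 0 + c * v i 1 else 0)))"
proof
  fix f
  show "collapse i c (tensor_prod k n v) f =
    tensor_prod k n (v(i := (\<lambda>j. if j = 0 then v i 0 + c * v i 1 else 0))) f"
  proof (cases "f i = 0")
    case True
    then have f0: "f(i := 0) = f" by auto
    have "f(i := 1) \<in> idx k n \<longleftrightarrow> f \<in> idx k n"
      using idx_update[OF assms(1), of f 1 n] idx_update[OF assms(1), of f 0 n] assms(2) f0 by simp
    moreover have "tensor_prod k n v f =
        (if f \<in> idx k n then v i 0 * (\<Prod>l\<in>{..<k} - {i}. v l (f l)) else 0)"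
      using tensor_prod_update_factor[OF assms(1), of n v "v i" f 0] by (simp add: f0)
    ultimately show ?thesis
      using True tensor_prod_update_factor[OF assms(1), of n v "v i" f]
        tensor_prod_update_factor[OF assms(1), of n v _ f 0]
      by (simp add: collapse_def algebra_simps f0)
  next
    case False
    then show ?thesis
      using tensor_prod_split_factor[OF assms(1),
          of f n "v(i := (\<lambda>j. if j = 0 then v i 0 + c * v i 1 else 0))"]
      by (auto simp: collapse_def tensor_prod_def)
  qed
qed

lemma collapse_segre_cone:
  assumes "D \<in> segre_cone k n" "i < k" "1 \<le> n i"
  shows "collapse i c D \<in> segre_cone k n \<or> collapse i c D = (\<lambda>f. 0)"
proof -
  obtain v where v: "\<forall>l<k. \<exists>j\<le>n l. v l j \<noteq> 0" "D = tensor_prod k n v"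
    using assms(1) unfolding segre_cone_iff by blast
  define w where "w = v(i := (\<lambda>j. if j = 0 then v i 0 + c * v i 1 else 0))"
  have D: "collapse i c D = tensor_prod k n w"
    unfolding v(2) w_def by (rule collapse_tensor_prod[of i k n, OF assms(2,3)])
  show ?thesis
  proof (cases "v i 0 + c * v i 1 = 0")
    case True
    then have "tensor_prod k n w = (\<lambda>f. 0)"
      by (intro tensor_prod_zero_factor[OF assms(2)]) (simp add: w_def)
    then show ?thesis
      using D by simp
  next
    case False
    then have "\<forall>l<k. \<exists>j\<le>n l. w l j \<noteq> 0"
      using v(1) unfolding w_def by auto
    then show ?thesis
      unfolding segre_cone_iff D by blast
  qed
qed

lemma collapse_sum_list: "collapse i c (\<lambda>f. \<Sum>D\<leftarrow>L. D f) = (\<lambda>f. \<Sum>D\<leftarrow>L. collapse i c D f)"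
  by (auto simp: collapse_def fun_eq_iff sum_list_addf sum_list_const_mult)

lemma collapse_set_tensor:
  "collapse i c (set_tensor \<kappa>) = set_tensor (\<lambda>S. if i \<in> S then 0 else \<kappa> S + c * \<kappa> (insert i S))"
proof
  fix f :: "nat \<Rightarrow> nat"
  show "collapse i c (set_tensor \<kappa>) f =
    set_tensor (\<lambda>S. if i \<in> S then 0 else \<kappa> S + c * \<kappa> (insert i S)) f"
  proof (cases "\<exists>S. f = indicator S")
    case True
    then obtain S where "f = indicator S" by blast
    then show ?thesis
      by (cases "i \<in> S")
        (simp_all add: collapse_def indicator_update[unfolded One_nat_def] insert_absorb)
  next
    case False
    moreover have "f(i := 1) \<noteq> indicator S" if "f i = 0" for S
      using False that fun_upd_upd[of f i 1 0] indicator_update(2)[of S i] by (metis fun_upd_triv)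
    ultimately show ?thesis
      by (simp add: collapse_def set_tensor_not_indicator fun_upd_idem)
  qed
qed

section \<open>The substitution method\<close>

text \<open>Zero summands are allowed so that the notion is stable under collapse.\<close>

definition has_rank_le :: "nat \<Rightarrow> (nat \<Rightarrow> nat) \<Rightarrow> nat \<Rightarrow> ((nat \<Rightarrow> nat) \<Rightarrow> 'a::field) \<Rightarrow> bool" where
  "has_rank_le k n s T \<longleftrightarrow> (\<exists>L. length L \<le> s \<and> (\<forall>D\<in>set L. D \<in> segre_cone k n \<or> D = (\<lambda>f. 0))
      \<and> T = (\<lambda>f. \<Sum>D\<leftarrow>L. D f))"

lemma has_rank_le_0: "has_rank_le k n 0 T \<Longrightarrow> T = (\<lambda>f. 0)"
  unfolding has_rank_le_def by auto

lemma sums_of_has_rank_le: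
  assumes "T \<in> sums_of k n s"
  shows "has_rank_le k n s T"
proof -
  obtain Ts where Ts: "\<forall>j<s. Ts j \<in> segre_cone k n" "T = (\<lambda>f. \<Sum>j<s. Ts j f)"
    using assms unfolding sums_of_def by blast
  have "(\<Sum>j<s. Ts j f) = (\<Sum>D\<leftarrow>map Ts [0..<s]. D f)" for f
    by (simp add: interv_sum_list_conv_sum_set_nat atLeast0LessThan o_def)
  then show ?thesis
    unfolding has_rank_le_def using Ts by (intro exI[of _ "map Ts [0..<s]"]) auto
qed

lemma has_rank_le_collapse_sum_list:
  assumes "length L \<le> s" "\<forall>D\<in>set L. D \<in> segre_cone k n \<or> D = (\<lambda>f. 0)" "i < k" "1 \<le> n i"
    and "D \<in> set L" "collapse i c D = (\<lambda>f. 0)"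
  shows "has_rank_le k n (s - 1) (collapse i c (\<lambda>f. \<Sum>D\<leftarrow>L. D f))"
proof -
  define L' where "L' = filter (\<lambda>E. E \<noteq> (\<lambda>f. 0)) (map (collapse i c) L)"
  have "length L' < length (map (collapse i c) L)"
    unfolding L'_def
    by (rule length_filter_less[of "collapse i c D"]) (simp add: assms(5), simp add: assms(6))
  then have "length L' \<le> s - 1"
    using assms(1) by simp
  moreover have "E \<in> segre_cone k n \<or> E = (\<lambda>f. 0)" if E: "E \<in> set L'" for E
  proof -
    obtain D' where D': "D' \<in> set L" "E = collapse i c D'"
      using E unfolding L'_def by auto
    show ?thesis
    proof (cases "D' = (\<lambda>f. 0)")
      case True
      then show ?thesis
        using D'(2) by (simp add: collapse_def fun_eq_iff)
    next
      case False
      then show ?thesis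
        using D' assms(2) collapse_segre_cone[of _ k n i, OF _ assms(3,4)] by blast
    qed
  qed
  moreover have "collapse i c (\<lambda>f. \<Sum>D\<leftarrow>L. D f) = (\<lambda>g. \<Sum>E\<leftarrow>L'. E g)"
    unfolding collapse_sum_list L'_def by (rule ext, induction L) auto
  ultimately show ?thesis
    unfolding has_rank_le_def by blast
qed

text \<open>Some summand has a nonzero entry at f, hence a nonzero second coordinate in its i-th factor,
  and c is chosen so that collapse i c kills that summand.\<close>

lemma has_rank_le_collapse:
  assumes "has_rank_le k n s T" "T f \<noteq> 0" "f i = 1"
  shows "\<exists>c. has_rank_le k n (s - 1) (collapse i c T)"
proof -
  obtain L where L: "length L \<le> s" "\<forall>D\<in>set L. D \<in> segre_cone k n \<or> D = (\<lambda>f. 0)"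
    "T = (\<lambda>f. \<Sum>D\<leftarrow>L. D f)"
    using assms(1) unfolding has_rank_le_def by blast
  have "(\<Sum>D\<leftarrow>L. D f) \<noteq> 0"
    using assms(2) L(3) by simp
  then have "\<exists>D\<in>set L. D f \<noteq> 0"
    by (induction L) auto
  then obtain D where D: "D \<in> set L" "D f \<noteq> 0"
    by blast
  then obtain v where v: "D = tensor_prod k n v"
    using L(2) unfolding segre_cone_iff by fastforce
  then have f: "f \<in> idx k n"
    using D(2) unfolding tensor_prod_def by (auto split: if_splits)
  have i: "i < k" "1 \<le> n i"
    using idx_nonzero[OF f, of i] assms(3) by simp_all
  have "v i 1 \<noteq> 0"
    using D(2) tensor_prod_split_factor[OF i(1) f, of v] assms(3) v by auto
  define c where "c = - v i 0 / v i 1"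
  then have "v i 0 + c * v i 1 = 0"
    using \<open>v i 1 \<noteq> 0\<close> by (simp add: field_simps)
  then have "collapse i c D = (\<lambda>f. 0)"
    unfolding v collapse_tensor_prod[of i k n, OF i]
    by (intro tensor_prod_zero_factor[OF i(1)]) auto
  then show ?thesis
    unfolding L(3) using has_rank_le_collapse_sum_list[OF L(1,2) i D(1)] by blast
qed

section \<open>The witness family\<close>

text \<open>The witness of the theorem is w_tensor {..<x - 1} 0 1 {..<k}; the extra parameters make the
  family closed under collapse.\<close>

definition w_tensor :: "nat set \<Rightarrow> 'a::field \<Rightarrow> 'a \<Rightarrow> nat set \<Rightarrow> (nat \<Rightarrow> nat) \<Rightarrow> 'a" where
  "w_tensor A \<alpha> \<gamma> P = set_tensor (\<lambda>S. (if \<exists>i\<in>A. S = {i} then 1 else 0)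
     + (if S = {} then \<alpha> else 0) + (if S = P then \<gamma> else 0))"

lemma w_tensor_indicator:
  "w_tensor A \<alpha> \<gamma> P (indicator S) =
     (if \<exists>i\<in>A. S = {i} then 1 else 0) + (if S = {} then \<alpha> else 0) + (if S = P then \<gamma> else 0)"
  unfolding w_tensor_def by simp

lemma w_tensor_in_tensors:
  assumes "\<forall>l<k. 1 \<le> n l" "A \<subseteq> {..<k}" "P \<subseteq> {..<k}"
  shows "w_tensor A \<alpha> \<gamma> P \<in> tensors k n"
  unfolding w_tensor_def using assms by (intro set_tensor_in_tensors) auto

lemma collapse_w_tensor:
  assumes "i \<in> P" "A \<subseteq> P"
  shows "collapse i c (w_tensor A \<alpha> \<gamma> P) =
    w_tensor (A - {i}) (if i \<in> A then \<alpha> + c else \<alpha>) (c * \<gamma>) (P - {i})"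
  unfolding w_tensor_def collapse_set_tensor
proof (intro arg_cong[where f = set_tensor] ext, goal_cases)
  case (1 S)
  show ?case
  proof (cases "i \<in> S")
    case True
    then show ?thesis by auto
  next
    case False
    then have "(\<exists>j\<in>A. insert i S = {j}) \<longleftrightarrow> S = {} \<and> i \<in> A"
      "insert i S = P \<longleftrightarrow> S = P - {i}" "S \<noteq> P"
      "(\<exists>j\<in>A. S = {j}) \<longleftrightarrow> (\<exists>j\<in>A - {i}. S = {j})"
      using assms(1) by auto
    then show ?thesis
      using False by (simp add: algebra_simps)
  qed
qed

lemma w_tensor_indicator_singleton:
  assumes "i \<in> A" "P \<noteq> {i}"
  shows "w_tensor A \<alpha> \<gamma> P (indicator {i}) = 1"
  using assms by (auto simp: w_tensor_indicator)

lemma card_le_if_has_rank_le_w_tensor: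
  assumes "has_rank_le k n s (w_tensor A \<alpha> \<gamma> P)" "A \<subseteq> P" "finite P" "\<not> P \<subseteq> A"
  shows "card A \<le> s"
  using assms
proof (induction s arbitrary: A \<alpha> \<gamma> P)
  case 0
  show ?case
  proof (rule ccontr)
    assume "\<not> card A \<le> 0"
    then obtain i where "i \<in> A"
      by fastforce
    then have "w_tensor A \<alpha> \<gamma> P (indicator {i}) = 1"
      using "0.prems"(4) by (intro w_tensor_indicator_singleton) auto
    then show False
      using has_rank_le_0[OF "0.prems"(1)] by simp
  qed
next
  case (Suc s)
  show ?case
  proof (cases "A = {}")
    case False
    then obtain i where i: "i \<in> A" by blast
    then have "w_tensor A \<alpha> \<gamma> P (indicator {i}) = 1"
      using Suc.prems(4) by (intro w_tensor_indicator_singleton) auto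
    then obtain c where "has_rank_le k n s (collapse i c (w_tensor A \<alpha> \<gamma> P))"
      using has_rank_le_collapse[OF Suc.prems(1), of "indicator {i}" i] by auto
    then have "has_rank_le k n s (w_tensor (A - {i}) (\<alpha> + c) (c * \<gamma>) (P - {i}))"
      using collapse_w_tensor[of i P A c \<alpha> \<gamma>] i Suc.prems(2) by auto
    then have "card (A - {i}) \<le> s"
      by (rule Suc.IH) (use Suc.prems i in auto)
    then show ?thesis
      using i Suc.prems(2,3) by (simp add: finite_subset)
  qed simp
qed

lemma card_less_if_has_rank_le_w_tensor:
  assumes "has_rank_le k n s (w_tensor A \<alpha> \<gamma> P)" "A \<subseteq> P" "finite P" "\<gamma> \<noteq> 0"
    and "2 \<le> card (P - A)"
  shows "card A < s"
proof -
  obtain j j' where j: "j \<in> P - A" and j': "j' \<in> P - A" "j' \<noteq> j"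
    using assms(5) by (auto simp: numeral_2_eq_2 card_le_Suc_iff)
  have "\<not> (\<exists>i\<in>A. P = {i})" "P \<noteq> {}"
    using j j' by auto
  then have entry: "w_tensor A \<alpha> \<gamma> P (indicator P) = \<gamma>"
    by (simp add: w_tensor_indicator)
  then obtain c where "has_rank_le k n (s - 1) (collapse j c (w_tensor A \<alpha> \<gamma> P))"
    using has_rank_le_collapse[OF assms(1), of "indicator P" j] assms(4) j(1) by auto
  then have "has_rank_le k n (s - 1) (w_tensor A \<alpha> (c * \<gamma>) (P - {j}))"
    using collapse_w_tensor[of j P A c \<alpha> \<gamma>] j(1) assms(2) by auto
  then have "card A \<le> s - 1"
    by (rule card_le_if_has_rank_le_w_tensor) (use assms(2,3) j j' in auto)
  moreover have "s \<noteq> 0"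
  proof
    assume "s = 0"
    then have "w_tensor A \<alpha> \<gamma> P (indicator P) = 0"
      using has_rank_le_0 assms(1) by metis
    then show False
      using entry assms(4) by simp
  qed
  ultimately show ?thesis
    by simp
qed

lemma sum_if_eq_singleton:
  assumes "finite A"
  shows "(\<Sum>i\<in>A. if S = {i} then b else 0) = (if \<exists>i\<in>A. S = {i} then b else (0::'a::comm_monoid_add))"
proof (cases "\<exists>i\<in>A. S = {i}")
  case True
  then obtain j where "j \<in> A" "S = {j}" by blast
  then show ?thesis
    using assms by (simp add: sum.delta)
qed auto

lemma w_tensor_eq_sum:
  assumes "finite A"
  shows "w_tensor A 0 1 P f = (\<Sum>i\<in>A. basis_tensor {i} f) + basis_tensor P f"
proof (cases "\<exists>S. f = indicator S")
  case True
  then obtain S where "f = indicator S" by blast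
  then show ?thesis
    using assms by (simp add: w_tensor_indicator basis_tensor_def indicator_eq_indicator_iff
        sum_if_eq_singleton)
next
  case False
  then show ?thesis
    unfolding w_tensor_def basis_tensor_def by (simp add: set_tensor_not_indicator)
qed

lemma w_tensor_in_sums_of:
  assumes "\<forall>l<k. 1 \<le> n l" "A \<subseteq> {..<k}" "P \<subseteq> {..<k}"
  shows "(w_tensor A 0 1 P :: (nat \<Rightarrow> nat) \<Rightarrow> 'a::field) \<in> sums_of k n (Suc (card A))"
proof -
  have "finite A"
    using assms(2) finite_subset by blast
  then obtain h where h: "bij_betw h {..<card A} A"
    using ex_bij_betw_nat_finite lessThan_atLeast0 by metis
  define Ts :: "nat \<Rightarrow> (nat \<Rightarrow> nat) \<Rightarrow> 'a" where
    "Ts j = (if j < card A then basis_tensor {h j} else basis_tensor P)" for j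
  have Ts: "\<forall>j<Suc (card A). Ts j \<in> segre_cone k n"
    using assms bij_betwE[OF h] unfolding Ts_def by (auto intro!: basis_tensor_in_segre_cone)
  have eq: "w_tensor A 0 1 P = (\<lambda>f. \<Sum>j<Suc (card A). Ts j f)"
  proof
    fix f
    have "(\<Sum>j<card A. Ts j f) = (\<Sum>j<card A. basis_tensor {h j} f)"
      unfolding Ts_def by simp
    also have "\<dots> = (\<Sum>i\<in>A. basis_tensor {i} f)"
      by (rule sum.reindex_bij_betw[OF h])
    moreover have "Ts (card A) f = basis_tensor P f"
      unfolding Ts_def by simp
    ultimately show "w_tensor A 0 1 P f = (\<Sum>j<Suc (card A). Ts j f)"
      using w_tensor_eq_sum[OF \<open>finite A\<close>] by simp
  qed
  show ?thesis
    unfolding sums_of_def by (intro CollectI exI[where x = Ts] conjI Ts eq)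
qed

section \<open>Border rank three\<close>

lemma infinite_UNIV_if_alg_closed:
  assumes "alg_closed TYPE('a::field)"
  shows "infinite (UNIV :: 'a set)"
proof
  assume fin: "finite (UNIV :: 'a set)"
  define p :: "'a poly" where "p = (\<Prod>a\<in>UNIV. [:- a, 1:]) + 1"
  have "degree (\<Prod>a\<in>(UNIV :: 'a set). [:- a, 1:]) = card (UNIV :: 'a set)"
    by (subst degree_prod_eq_sum_degree) auto
  moreover have "card (UNIV :: 'a set) > 0"
    using fin by (simp add: card_gt_0_iff)
  ultimately have "degree p > 0"
    unfolding p_def by (subst degree_add_eq_left) auto
  then obtain z where "poly p z = 0"
    using assms unfolding alg_closed_def by blast
  moreover have "poly (\<Prod>a\<in>(UNIV :: 'a set). [:- a, 1:]) z = 0"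
    using fin by (simp add: poly_prod prod_zero_iff)
  ultimately show False
    unfolding p_def by simp
qed

lemma poly_fun_polynomial_curve:
  assumes "P \<in> poly_fun k n"
    and "\<And>f. \<exists>q. poly q 0 = T f \<and> (\<forall>t. t \<noteq> 0 \<longrightarrow> Y t f = poly q t)"
  shows "\<exists>r. poly r 0 = P T \<and> (\<forall>t. t \<noteq> 0 \<longrightarrow> P (Y t) = poly r t)"
  using assms(1)
proof induction
  case (const c)
  show ?case
    by (intro exI[of _ "[:c:]"]) simp
next
  case (coord f)
  show ?case
    using assms(2)[of f] by simp
next
  case (add P Q)
  then obtain r1 r2 where "poly r1 0 = P T \<and> (\<forall>t. t \<noteq> 0 \<longrightarrow> P (Y t) = poly r1 t)"
    "poly r2 0 = Q T \<and> (\<forall>t. t \<noteq> 0 \<longrightarrow> Q (Y t) = poly r2 t)"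
    by blast
  then show ?case
    by (intro exI[of _ "r1 + r2"]) simp
next
  case (mult P Q)
  then obtain r1 r2 where "poly r1 0 = P T \<and> (\<forall>t. t \<noteq> 0 \<longrightarrow> P (Y t) = poly r1 t)"
    "poly r2 0 = Q T \<and> (\<forall>t. t \<noteq> 0 \<longrightarrow> Q (Y t) = poly r2 t)"
    by blast
  then show ?case
    by (intro exI[of _ "r1 * r2"]) simp
qed

lemma zariski_closure_polynomial_curve:
  fixes T :: "(nat \<Rightarrow> nat) \<Rightarrow> 'a::field"
  assumes "infinite (UNIV :: 'a set)" "T \<in> tensors k n"
    and "\<And>f. \<exists>q. poly q 0 = T f \<and> (\<forall>t. t \<noteq> 0 \<longrightarrow> Y t f = poly q t)"
    and "\<And>t. t \<noteq> 0 \<Longrightarrow> Y t \<in> A"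
  shows "T \<in> zariski_closure k n A"
  unfolding zariski_closure_def
proof (intro InterI, clarify)
  fix C
  assume "zariski_closed k n C" "A \<subseteq> C"
  then obtain S where S: "S \<subseteq> poly_fun k n" "C = {T \<in> tensors k n. \<forall>P\<in>S. P T = 0}"
    unfolding zariski_closed_def by blast
  have "P T = 0" if P: "P \<in> S" for P
  proof -
    obtain r where r: "poly r 0 = P T" "\<forall>t. t \<noteq> 0 \<longrightarrow> P (Y t) = poly r t"
      using poly_fun_polynomial_curve[of P k n T Y] S(1) P assms(3) by blast
    have "P (Y t) = 0" if "t \<noteq> 0" for t
      using assms(4)[OF that] \<open>A \<subseteq> C\<close> S(2) P by auto
    then have "UNIV - {0} \<subseteq> {t. poly r t = 0}"
      using r(2) by auto
    moreover have "infinite (UNIV - {0 :: 'a})"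
      using assms(1) by simp
    ultimately have "infinite {t. poly r t = 0}"
      using finite_subset by blast
    then have "r = 0"
      using poly_roots_finite by blast
    then show ?thesis
      using r(1) by simp
  qed
  then show "T \<in> C"
    using S(2) assms(2) by blast
qed

lemma set_tensor_polynomial_curve:
  assumes "\<And>S. \<exists>q. poly q 0 = \<kappa>0 S \<and> (\<forall>t. t \<noteq> 0 \<longrightarrow> \<kappa> t S = poly q t)"
  shows "\<exists>q. poly q 0 = set_tensor \<kappa>0 f \<and> (\<forall>t. t \<noteq> 0 \<longrightarrow> set_tensor (\<kappa> t) f = poly q t)"
proof (cases "f = indicator {l. f l \<noteq> 0}")
  case True
  then show ?thesis
    using assms[of "{l. f l \<noteq> 0}"] unfolding set_tensor_def by simp
next
  case False
  then show ?thesis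
    unfolding set_tensor_def by (intro exI[of _ 0]) simp
qed

definition curve_factor :: "nat set \<Rightarrow> 'a::field \<Rightarrow> nat \<Rightarrow> nat \<Rightarrow> 'a" where
  "curve_factor A t l j = (if j = 0 then 1 else if j = 1 \<and> l \<in> A then t else 0)"

lemma tensor_prod_curve_factor_indicator:
  assumes "\<forall>l<k. 1 \<le> n l" "A \<subseteq> {..<k}" "S \<subseteq> A"
  shows "tensor_prod k n (curve_factor A t) (indicator S) = t ^ card S"
proof -
  have S: "S \<subseteq> {..<k}"
    using assms(2,3) by blast
  have "curve_factor A t l (indicator S l) = (if l \<in> S then t else 1)" for l
    using assms(3) by (auto simp: curve_factor_def indicator_def)
  then have "tensor_prod k n (curve_factor A t) (indicator S) = (\<Prod>l<k. if l \<in> S then t else 1)"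
    using indicator_in_idx[OF assms(1) S] unfolding tensor_prod_def by simp
  also have "\<dots> = (\<Prod>l\<in>{l \<in> {..<k}. l \<in> S}. t)"
    by (rule prod.inter_filter[symmetric]) simp
  also have "{l \<in> {..<k}. l \<in> S} = S"
    using S by auto
  finally show ?thesis
    by simp
qed

lemma tensor_prod_curve_factor_eq_0:
  assumes "\<And>S. S \<subseteq> A \<Longrightarrow> f \<noteq> indicator S"
  shows "tensor_prod k n (curve_factor A t) f = 0"
proof (cases "f \<in> idx k n")
  case True
  have "\<exists>l<k. f l \<noteq> 0 \<and> (f l \<noteq> 1 \<or> l \<notin> A)"
  proof (rule ccontr)
    assume "\<not> ?thesis"
    then have h: "\<forall>l<k. f l = 0 \<or> (f l = 1 \<and> l \<in> A)"
      by auto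
    have sub: "{l. f l \<noteq> 0} \<subseteq> A"
    proof
      fix l
      assume "l \<in> {l. f l \<noteq> 0}"
      then have "f l \<noteq> 0" "l < k"
        using idx_nonzero(1)[OF True] by auto
      then show "l \<in> A"
        using h by auto
    qed
    have eq: "f = indicator {l. f l \<noteq> 0}"
    proof
      fix l
      show "f l = indicator {l. f l \<noteq> 0} l"
        using h idx_nonzero(1)[OF True, of l] by (cases "l < k") (auto simp: indicator_def)
    qed
    show False
      using assms[OF sub] eq by (rule notE)
  qed
  then obtain l where "l < k" "curve_factor A t l (f l) = 0"
    unfolding curve_factor_def by auto
  then show ?thesis
    unfolding tensor_prod_def by (auto simp: prod_zero_iff)
qed (simp add: tensor_prod_def)

lemma tensor_prod_curve_factor:
  assumes "\<forall>l<k. 1 \<le> n l" "A \<subseteq> {..<k}"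
  shows "tensor_prod k n (curve_factor A t) = set_tensor (\<lambda>S. if S \<subseteq> A then t ^ card S else 0)"
proof
  fix f :: "nat \<Rightarrow> nat"
  show "tensor_prod k n (curve_factor A t) f = set_tensor (\<lambda>S. if S \<subseteq> A then t ^ card S else 0) f"
  proof (cases "\<exists>S\<subseteq>A. f = indicator S")
    case True
    then obtain S where "S \<subseteq> A" "f = indicator S"
      by blast
    then show ?thesis
      using tensor_prod_curve_factor_indicator[OF assms] by simp
  next
    case False
    then show ?thesis
      using tensor_prod_curve_factor_eq_0[of A f] unfolding set_tensor_def by auto
  qed
qed

definition w_curve :: "nat \<Rightarrow> (nat \<Rightarrow> nat) \<Rightarrow> nat set \<Rightarrow> nat set \<Rightarrow> 'a::field \<Rightarrow> (nat \<Rightarrow> nat) \<Rightarrow> 'a" where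
  "w_curve k n A P t f =
    (1 / t) * tensor_prod k n (curve_factor A t) f - (1 / t) * basis_tensor {} f + basis_tensor P f"

lemma w_curve_in_sums_of:
  assumes "\<forall>l<k. 1 \<le> n l" "P \<subseteq> {..<k}" "0 < k" "t \<noteq> 0"
  shows "w_curve k n A P t \<in> sums_of k n 3"
proof -
  define Ts :: "nat \<Rightarrow> (nat \<Rightarrow> nat) \<Rightarrow> 'a" where
    "Ts j = (if j = 0 then (\<lambda>f. (1 / t) * tensor_prod k n (curve_factor A t) f)
      else if j = 1 then (\<lambda>f. (- 1 / t) * basis_tensor {} f) else basis_tensor P)" for j
  have Ts: "Ts 0 = (\<lambda>f. (1 / t) * tensor_prod k n (curve_factor A t) f)"
    "Ts 1 = (\<lambda>f. (- 1 / t) * basis_tensor {} f)" "Ts 2 = basis_tensor P"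
    by (simp_all add: Ts_def)
  have "tensor_prod k n (curve_factor A t) \<in> segre_cone k n"
    unfolding segre_cone_iff by (intro exI[of _ "curve_factor A t"]) (auto simp: curve_factor_def)
  then have "Ts 0 \<in> segre_cone k n"
    unfolding Ts(1) by (rule segre_cone_scale[OF _ _ assms(3)]) (use assms(4) in simp)
  moreover have "Ts 1 \<in> segre_cone k n"
    unfolding Ts(2) using assms(1)
    by (intro segre_cone_scale[OF _ _ assms(3)] basis_tensor_in_segre_cone)
      (use assms(4) in simp_all)
  moreover have "Ts 2 \<in> segre_cone k n"
    unfolding Ts(3) using assms(1,2) by (rule basis_tensor_in_segre_cone)
  ultimately have segre: "\<forall>j<3. Ts j \<in> segre_cone k n"
    by (auto simp: less_Suc_eq numeral_3_eq_3 numeral_2_eq_2)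
  have sum: "w_curve k n A P t = (\<lambda>f. \<Sum>j<3. Ts j f)"
    by (simp add: fun_eq_iff w_curve_def Ts_def numeral_3_eq_3)
  show ?thesis
    unfolding sums_of_def by (intro CollectI exI[where x = Ts] conjI segre sum)
qed

text \<open>The expression is t ^ (card S - 1) for nonempty S \<subseteq> A and vanishes otherwise.\<close>

lemma power_card_div_polynomial:
  assumes "finite A"
  shows "\<exists>q :: 'a::field poly. poly q 0 = (if \<exists>i\<in>A. S = {i} then 1 else 0) \<and>
    (\<forall>t. t \<noteq> 0 \<longrightarrow> (if S \<subseteq> A then t ^ card S / t else 0) - (if S = {} then 1 / t else 0) = poly q t)"
proof (cases "S \<subseteq> A \<and> S \<noteq> {}")
  case True
  moreover have "finite S"
    by (rule finite_subset[OF _ assms]) (use True in blast)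
  ultimately have "card S \<noteq> 0"
    by simp
  then obtain m where m: "card S = Suc m"
    using not0_implies_Suc by blast
  have "m = 0 \<longleftrightarrow> card S = 1"
    using m by simp
  also have "\<dots> \<longleftrightarrow> (\<exists>i. S = {i})"
    by (simp add: card_1_singleton_iff)
  also have "\<dots> \<longleftrightarrow> (\<exists>i\<in>A. S = {i})"
    using True by auto
  finally have singleton: "m = 0 \<longleftrightarrow> (\<exists>i\<in>A. S = {i})" .
  have "poly (monom 1 m) 0 = (if m = 0 then 1 else (0::'a))"
    by (simp add: poly_monom)
  then have "poly (monom 1 m) 0 = (if \<exists>i\<in>A. S = {i} then 1 else (0::'a))"
    unfolding singleton .
  moreover have "(t::'a) ^ card S / t = poly (monom 1 m) t" if "t \<noteq> 0" for t
    using that unfolding m by (simp add: poly_monom)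
  ultimately show ?thesis
    using True by (intro exI[of _ "monom 1 m"]) simp
next
  case False
  then show ?thesis
    by (intro exI[of _ 0]) auto
qed

lemma w_curve_polynomial:
  assumes "\<forall>l<k. 1 \<le> n l" "A \<subseteq> {..<k}"
  shows "\<exists>q. poly q 0 = (w_tensor A 0 1 P f :: 'a::field) \<and>
    (\<forall>t. t \<noteq> 0 \<longrightarrow> w_curve k n A P t f = poly q t)"
proof -
  have "finite A"
    using assms(2) by (rule finite_subset) simp
  define \<kappa> :: "'a \<Rightarrow> nat set \<Rightarrow> 'a" where
    "\<kappa> t S = (if S \<subseteq> A then t ^ card S / t else 0) - (if S = {} then 1 / t else 0)
      + (if S = P then 1 else 0)" for t S
  define \<kappa>0 :: "nat set \<Rightarrow> 'a" where
    "\<kappa>0 S = (if \<exists>i\<in>A. S = {i} then 1 else 0) + (if S = P then 1 else 0)" for S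
  have "w_curve k n A P t g = set_tensor (\<kappa> t) g" for t g
    unfolding w_curve_def tensor_prod_curve_factor[OF assms] basis_tensor_eq_set_tensor
    by (simp add: set_tensor_def \<kappa>_def)
  moreover have "w_tensor A 0 1 P = set_tensor \<kappa>0"
    unfolding w_tensor_def \<kappa>0_def by simp
  moreover have "\<exists>q. poly q 0 = \<kappa>0 S \<and> (\<forall>t. t \<noteq> 0 \<longrightarrow> \<kappa> t S = poly q t)" for S
  proof -
    obtain q :: "'a poly" where q: "poly q 0 = (if \<exists>i\<in>A. S = {i} then 1 else 0)"
      "\<forall>t. t \<noteq> 0 \<longrightarrow> (if S \<subseteq> A then t ^ card S / t else 0) - (if S = {} then 1 / t else 0) = poly q t"
      using power_card_div_polynomial[OF \<open>finite A\<close>, of S] by blast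
    define q' where "q' = q + [:if S = P then 1 else 0:]"
    have "poly q' 0 = \<kappa>0 S" "\<forall>t. t \<noteq> 0 \<longrightarrow> \<kappa> t S = poly q' t"
      using q unfolding q'_def \<kappa>_def \<kappa>0_def by simp_all
    then show ?thesis
      by blast
  qed
  ultimately show ?thesis
    using set_tensor_polynomial_curve[of \<kappa>0 \<kappa> f] by simp
qed

lemma w_tensor_in_secant_cone_3:
  assumes "infinite (UNIV :: 'a::field set)" "\<forall>l<k. 1 \<le> n l" "A \<subseteq> {..<k}" "P \<subseteq> {..<k}" "0 < k"
  shows "(w_tensor A 0 1 P :: (nat \<Rightarrow> nat) \<Rightarrow> 'a) \<in> secant_cone k n 3"
  unfolding secant_cone_def
  by (rule zariski_closure_polynomial_curve[where Y = "w_curve k n A P", OF assms(1)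
      w_tensor_in_tensors[OF assms(2,3,4)] w_curve_polynomial[OF assms(2,3)]
      w_curve_in_sums_of[OF assms(2,4,5)]])

section \<open>Flattening minors\<close>

definition det3 :: "(nat \<Rightarrow> nat \<Rightarrow> 'a::comm_ring_1) \<Rightarrow> 'a" where
  "det3 M = M 0 0 * M 1 1 * M 2 2 + M 0 1 * M 1 2 * M 2 0 + M 0 2 * M 1 0 * M 2 1
          - M 0 2 * M 1 1 * M 2 0 - M 0 0 * M 1 2 * M 2 1 - M 0 1 * M 1 0 * M 2 2"

lemma det3_rank_2: "det3 (\<lambda>i j. a1 i * b1 j + a2 i * b2 j) = 0"
  unfolding det3_def by (simp add: algebra_simps)

lemma poly_fun_diff:
  assumes "P \<in> poly_fun k n" "Q \<in> poly_fun k n"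
  shows "(\<lambda>T. P T - Q T) \<in> poly_fun k n"
proof -
  have "(\<lambda>T. P T + (\<lambda>T. - 1) T * Q T) \<in> poly_fun k n"
    by (intro poly_fun.add poly_fun.mult poly_fun.const assms)
  then show ?thesis
    by simp
qed

lemma poly_fun_det3:
  assumes "\<And>i j. (\<lambda>T. M T i j) \<in> poly_fun k n"
  shows "(\<lambda>T. det3 (M T)) \<in> poly_fun k n"
  unfolding det3_def by (intro poly_fun_diff poly_fun.add poly_fun.mult assms)

text \<open>Flattening along the partition {..<k} = I \<union> J turns decomposable tensors into rank one
  matrices.\<close>

lemma tensor_prod_indicator_Un:
  assumes "\<forall>l<k. 1 \<le> n l" "I \<inter> J = {}" "I \<union> J = {..<k}" "R \<subseteq> I" "C \<subseteq> J"
  shows "tensor_prod k n v (indicator (R \<union> C)) =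
    (\<Prod>l\<in>I. v l (indicator R l)) * (\<Prod>l\<in>J. v l (indicator C l))"
proof -
  have "finite I" "finite J"
    using assms(3) by (metis finite_Un finite_lessThan)+
  have "(\<Prod>l<k. v l (indicator (R \<union> C) l)) =
      (\<Prod>l\<in>I. v l (indicator (R \<union> C) l)) * (\<Prod>l\<in>J. v l (indicator (R \<union> C) l))"
    unfolding assms(3)[symmetric] using \<open>finite I\<close> \<open>finite J\<close> assms(2) by (rule prod.union_disjoint)
  also have "\<dots> = (\<Prod>l\<in>I. v l (indicator R l)) * (\<Prod>l\<in>J. v l (indicator C l))"
    using assms(2,4,5) by (intro arg_cong2[where f = "(*)"] prod.cong) (auto simp: indicator_def)
  finally show ?thesis
    using indicator_in_idx[OF assms(1), of "R \<union> C"] assms(3,4,5) unfolding tensor_prod_def by auto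
qed

lemma secant_cone_2_det3:
  assumes "\<forall>l<k. 1 \<le> n l" "I \<inter> J = {}" "I \<union> J = {..<k}" "\<And>i. R i \<subseteq> I" "\<And>j. C j \<subseteq> J"
    and "T \<in> secant_cone k n 2"
  shows "det3 (\<lambda>i j. T (indicator (R i \<union> C j))) = 0"
proof -
  define Z where "Z = {T \<in> tensors k n. det3 (\<lambda>i j. T (indicator (R i \<union> C j))) = (0 :: 'a)}"
  have "(\<lambda>T. T (indicator (R i \<union> C j))) \<in> poly_fun k n" for i j
    using assms(3-5) by (intro poly_fun.coord indicator_in_idx[OF assms(1)]) blast
  then have "(\<lambda>T. det3 (\<lambda>i j. T (indicator (R i \<union> C j)))) \<in> poly_fun k n"
    by (rule poly_fun_det3[of "\<lambda>T i j. T (indicator (R i \<union> C j))"])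
  then have "zariski_closed k n Z"
    unfolding zariski_closed_def Z_def
    by (intro exI[of _ "{\<lambda>T. det3 (\<lambda>i j. T (indicator (R i \<union> C j)))}"]) auto
  moreover have "sums_of k n 2 \<subseteq> Z"
  proof
    fix U :: "(nat \<Rightarrow> nat) \<Rightarrow> 'a"
    assume "U \<in> sums_of k n 2"
    then obtain Us where Us: "\<forall>j<2::nat. Us j \<in> segre_cone k n" "U = (\<lambda>f. \<Sum>j<2::nat. Us j f)"
      unfolding sums_of_def by blast
    obtain v w where "Us 0 = tensor_prod k n v" "Us 1 = tensor_prod k n w"
      using Us(1)[rule_format, of 0] Us(1)[rule_format, of 1] unfolding segre_cone_iff by auto
    then have U: "U = (\<lambda>f. tensor_prod k n v f + tensor_prod k n w f)"
      using Us(2) by (simp add: numeral_2_eq_2)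
    have "det3 (\<lambda>i j. U (indicator (R i \<union> C j))) = 0"
      unfolding U tensor_prod_indicator_Un[OF assms(1-3) assms(4,5)] by (rule det3_rank_2)
    moreover have "U \<in> tensors k n"
      using tensor_prod_in_tensors[of k n v] tensor_prod_in_tensors[of k n w]
      unfolding U tensors_def by simp
    ultimately show "U \<in> Z"
      unfolding Z_def by blast
  qed
  ultimately have "secant_cone k n 2 \<subseteq> Z"
    unfolding secant_cone_def zariski_closure_def by blast
  then show ?thesis
    using assms(6) unfolding Z_def by blast
qed

lemma w_tensor_det3:
  fixes a k :: nat
  assumes "2 \<le> a" "a + 2 \<le> k"
  defines "R \<equiv> \<lambda>i::nat. if i = 0 then {0} else if i = 1 then {} else {0, k - 1}"
    and "C \<equiv> \<lambda>j::nat. if j = 0 then {} else if j = 1 then {1} else {..<k} - {0, k - 1}"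
  shows "det3 (\<lambda>i j. (w_tensor {..<a} 0 1 {..<k} :: (nat \<Rightarrow> nat) \<Rightarrow> 'a::field)
    (indicator (R i \<union> C j))) = 1"
proof -
  define e where "e S = (w_tensor {..<a} 0 1 {..<k} :: (nat \<Rightarrow> nat) \<Rightarrow> 'a) (indicator S)" for S
  have k: "k - 1 \<noteq> 0" "k - 1 \<noteq> 1" "k - 1 \<noteq> 2" "2 < k" "1 < a"
    using assms(1,2) by auto
  have e: "e S = (if \<exists>i<a. S = {i} then 1 else 0) + (if S = {..<k} then 1 else 0)" for S
    unfolding e_def w_tensor_indicator by simp
  have zero: "e S = 0" if "z < k" "z \<notin> S" "x \<in> S" "y \<in> S" "x \<noteq> y" for S x y z
    using that unfolding e by auto
  have one: "e {i} = 1" if "i < a" "z < k" "z \<noteq> i" for i z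
    using that unfolding e by auto
  have "e (R 0 \<union> C 0) = 1" "e (R 1 \<union> C 1) = 1"
    using one[of 0 1] one[of 1 0] k by (simp_all add: R_def C_def)
  moreover have "e (R 2 \<union> C 2) = 1"
  proof -
    have "R 2 \<union> C 2 = {..<k}"
      using k by (simp add: R_def C_def Un_Diff_cancel insert_absorb)
    moreover have "{..<k} \<noteq> {i}" for i
    proof
      assume h: "{..<k} = {i}"
      have "0 \<in> {..<k}" "1 \<in> {..<k}"
        using k by simp_all
      then show False
        unfolding h by simp
    qed
    ultimately show ?thesis
      unfolding e by simp
  qed
  moreover have "e (R 0 \<union> C 1) = 0"
    by (rule zero[of 2 _ 0 1]) (use k in \<open>simp_all add: R_def C_def\<close>)
  moreover have "e (R 0 \<union> C 2) = 0"
    by (rule zero[of "k - 1" _ 0 1]) (use k in \<open>simp_all add: R_def C_def\<close>)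
  moreover have "e (R 1 \<union> C 0) = 0"
    unfolding e by (simp add: R_def C_def) (use k in blast)
  moreover have "e (R 1 \<union> C 2) = 0"
    by (rule zero[of 0 _ 1 2]) (use k in \<open>simp_all add: R_def C_def\<close>)
  moreover have "e (R 2 \<union> C 0) = 0"
    by (rule zero[of 1 _ 0 "k - 1"]) (use k in \<open>simp_all add: R_def C_def\<close>)
  moreover have "e (R 2 \<union> C 1) = 0"
    by (rule zero[of 2 _ 0 1]) (use k in \<open>simp_all add: R_def C_def\<close>)
  ultimately have "det3 (\<lambda>i j. e (R i \<union> C j)) = 1"
    unfolding det3_def by simp
  then show ?thesis
    unfolding e_def .
qed

lemma w_tensor_not_in_secant_cone_2:
  assumes "\<forall>l<k. 1 \<le> n l" "2 \<le> a" "a + 2 \<le> k"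
  shows "(w_tensor {..<a} 0 1 {..<k} :: (nat \<Rightarrow> nat) \<Rightarrow> 'a::field) \<notin> secant_cone k n 2"
proof
  define R where "R i = (if i = 0 then {0} else if i = 1 then {} else {0, k - 1})" for i :: nat
  define C where
    "C j = (if j = 0 then {} else if j = 1 then {1} else {..<k} - {0, k - 1})" for j :: nat
  assume "(w_tensor {..<a} 0 1 {..<k} :: (nat \<Rightarrow> nat) \<Rightarrow> 'a) \<in> secant_cone k n 2"
  then have "det3 (\<lambda>i j. (w_tensor {..<a} 0 1 {..<k} :: (nat \<Rightarrow> nat) \<Rightarrow> 'a)
      (indicator (R i \<union> C j))) = 0"
    using assms(2,3)
    by (intro secant_cone_2_det3[where I = "{0, k - 1}" and J = "{..<k} - {0, k - 1}", OF assms(1)])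
      (auto simp: R_def C_def)
  moreover have "det3 (\<lambda>i j. (w_tensor {..<a} 0 1 {..<k} :: (nat \<Rightarrow> nat) \<Rightarrow> 'a)
      (indicator (R i \<union> C j))) = 1"
    unfolding R_def C_def by (rule w_tensor_det3[OF assms(2,3)])
  ultimately show False
    by simp
qed

lemma X_rank_w_tensor:
  assumes "\<forall>l<k. 1 \<le> n l" "A \<subseteq> {..<k}" "2 \<le> card ({..<k} - A)"
  shows "X_rank k n (w_tensor A 0 1 {..<k} :: (nat \<Rightarrow> nat) \<Rightarrow> 'a::field) = Suc (card A)"
  unfolding X_rank_def
proof (rule Least_equality)
  show "(w_tensor A 0 1 {..<k} :: (nat \<Rightarrow> nat) \<Rightarrow> 'a) \<in> sums_of k n (Suc (card A))"
    by (rule w_tensor_in_sums_of[OF assms(1,2) subset_refl])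
next
  fix s
  assume "(w_tensor A 0 1 {..<k} :: (nat \<Rightarrow> nat) \<Rightarrow> 'a) \<in> sums_of k n s"
  then have "card A < s"
    by (intro card_less_if_has_rank_le_w_tensor[OF sums_of_has_rank_le]) (use assms(2,3) in auto)
  then show "Suc (card A) \<le> s"
    by simp
qed

theorem theorem2:
  fixes k :: nat and n :: "nat \<Rightarrow> nat" and x :: nat
  assumes "alg_closed TYPE('a::field)"
    and "k \<ge> 3"
    and "\<forall>i<k. n i \<ge> 1"
    and "3 \<le> x" and "x \<le> k - 1"
  shows "\<exists>T :: (nat \<Rightarrow> nat) \<Rightarrow> 'a. T \<in> tensors k n \<and> T \<noteq> (\<lambda>f. 0) \<and>
           T \<in> secant_cone k n 3 \<and> T \<notin> secant_cone k n 2 \<and> X_rank k n T = x"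
proof -
  define a where "a = x - 1"
  have a: "2 \<le> a" "a + 2 \<le> k" "x = Suc a" "0 < k"
    using assms(4,5) unfolding a_def by auto
  then have A: "{..<a} \<subseteq> {..<k}" "2 \<le> card ({..<k} - {..<a})"
    by (simp_all add: card_Diff_subset)
  let ?T = "w_tensor {..<a} 0 1 {..<k} :: (nat \<Rightarrow> nat) \<Rightarrow> 'a"
  have "1 \<in> {..<k}"
    using a by simp
  then have "{..<k} \<noteq> {0}"
    by auto
  then have "?T (indicator {0}) = 1"
    using a(1) by (intro w_tensor_indicator_singleton) auto
  then have nonzero: "?T \<noteq> (\<lambda>f. 0)"
    by (metis zero_neq_one)
  have rank: "X_rank k n ?T = x"
    using X_rank_w_tensor[OF assms(3) A(1,2)] a(3) by simp
  show ?thesis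
    by (intro exI[of _ ?T] conjI w_tensor_in_tensors[OF assms(3) A(1) subset_refl] nonzero rank
        w_tensor_in_secant_cone_3[OF infinite_UNIV_if_alg_closed[OF assms(1)] assms(3) A(1)
          subset_refl a(4)]
        w_tensor_not_in_secant_cone_2[OF assms(3) a(1,2)])
qed

end
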